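(* Let $Y$ be a $\mathbb{Q}$-vector space with an involution $y\mapsto\bar y$, and let $X^0_{(n)}=\sum_{w\in B_n,\ w_1<w_2<\dots<w_n}w\in\mathbb{Q}B_n$. Then for all $y_1,\dots,y_n\in Y$, $$(y_1\otimes\cdots\otimes y_n)\cdot X^0_{(n)}=\tau\Bigl(\cdots\tau\bigl(\tau(y_1)\,y_2\bigr)\,y_3\cdots y_n\Bigr).$$
   Context: $B_n$: signed permutations $w=w_1\dots w_n$ (bijections of $\{\pm1,\dots,\pm n\}$ with $w(-i)=-w(i)$), values ordered $\cdots<-2<-1<1<2<\cdots$. $B_n$ acts on $Y^{\otimes n}$ on the right by $(y_1\otimes\cdots\otimes y_n)\cdot w=y_{w_1}\otimes\cdots\otimes y_{w_n}$, where $y_{-i}$ means $\bar y_i$; this is extended linearly to $\mathbb{Q}B_n$. In the tensor algebra $TY=\bigoplus_{m\ge0}Y^{\otimes m}$, juxtaposition denotes the tensor product, and the symmetrizer $\tau:TY\to TY$ is the linear map $\tau(y_1\otimes\cdots\otimes y_m)=y_1\otimes\cdots\otimes y_m+\bar y_m\otimes\cdots\otimes\bar y_1$. *)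

theory Defs
  imports Complex_Main
begin

text \<open>The hyperoctahedral group B_n: bijections w of {+-1,...,+-n} with w(-i) = -w(i),
  represented as functions int => int that are the identity outside {+-1,...,+-n}.
  The value order ... < -2 < -1 < 1 < 2 < ... is the order of int.\<close>
definition signed_perms :: "nat \<Rightarrow> (int \<Rightarrow> int) set" where
  "signed_perms n = {w. bij_betw w {i. 1 \<le> \<bar>i\<bar> \<and> \<bar>i\<bar> \<le> int n} {i. 1 \<le> \<bar>i\<bar> \<and> \<bar>i\<bar> \<le> int n}
      \<and> (\<forall>i. w (- i) = - w i)
      \<and> (\<forall>i. \<not> (1 \<le> \<bar>i\<bar> \<and> \<bar>i\<bar> \<le> int n) \<longrightarrow> w i = i)}"

definition incr_signed_perms :: "nat \<Rightarrow> (int \<Rightarrow> int) set" where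
  "incr_signed_perms n = {w \<in> signed_perms n. \<forall>i::int. 1 \<le> i \<and> i < int n \<longrightarrow> w i < w (i + 1)}"

text \<open>y_k for k in {+-1..+-n}, with y_{-i} = bar y_i; ys lists y_1..y_n (1-indexed).\<close>
definition yidx :: "('y \<Rightarrow> 'y) \<Rightarrow> 'y list \<Rightarrow> int \<Rightarrow> 'y" where
  "yidx bar ys k = (if 0 < k then ys ! (nat k - 1) else bar (ys ! (nat (- k) - 1)))"

text \<open>The pure tensor (y_1 ... y_n) . w = y_{w_1} ... y_{w_n}, as the word of its factors.\<close>
definition act_word :: "('y \<Rightarrow> 'y) \<Rightarrow> 'y list \<Rightarrow> (int \<Rightarrow> int) \<Rightarrow> 'y list" where
  "act_word bar ys w = map (\<lambda>i. yidx bar ys (w (int i))) [1..<length ys + 1]"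

text \<open>Formal sums of pure tensors (all coefficients 1) are lists of words.
  The symmetrizer tau on a pure tensor, extended linearly.\<close>
definition tau :: "('y \<Rightarrow> 'y) \<Rightarrow> 'y list list \<Rightarrow> 'y list list" where
  "tau bar T = concat (map (\<lambda>ws. [ws, rev (map bar ws)]) T)"

definition rmul :: "'y list list \<Rightarrow> 'y \<Rightarrow> 'y list list" where
  "rmul T y = map (\<lambda>ws. ws @ [y]) T"

text \<open>tau( ... tau(tau(y_1) y_2) y_3 ... y_n ).\<close>
fun tau_iter :: "('y \<Rightarrow> 'y) \<Rightarrow> 'y list \<Rightarrow> 'y list list" where
  "tau_iter bar [] = [[]]"
| "tau_iter bar (y # ys) = foldl (\<lambda>T z. tau bar (rmul T z)) (tau bar [[y]]) ys"

definition lin_involution :: "(rat \<Rightarrow> 'y::ab_group_add \<Rightarrow> 'y) \<Rightarrow> ('y \<Rightarrow> 'y) \<Rightarrow> bool" where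
  "lin_involution sc bar \<longleftrightarrow> (\<forall>x y. bar (x + y) = bar x + bar y) \<and> (\<forall>c x. bar (sc c x) = sc c (bar x))
     \<and> (\<forall>x. bar (bar x) = x)"

definition multilinear :: "(rat \<Rightarrow> 'y::ab_group_add \<Rightarrow> 'y) \<Rightarrow> (rat \<Rightarrow> 'v::ab_group_add \<Rightarrow> 'v) \<Rightarrow> nat
    \<Rightarrow> ('y list \<Rightarrow> 'v) \<Rightarrow> bool" where
  "multilinear scY scV n f \<longleftrightarrow> (\<forall>ws i a b c. length ws = n \<and> i < n \<longrightarrow>
      f (ws[i := a + b]) = f (ws[i := a]) + f (ws[i := b]) \<and> f (ws[i := scY c a]) = scV c (f (ws[i := a])))"

end

theory Submission
  imports Defs
begin

text \<open>An increasing signed permutation w is determined by the set V = {w_1, ..., w_n} of its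
  values on positive arguments: V contains exactly one of j, -j for every j \<le> n, and
  w_1 < ... < w_n lists V in increasing order. So the left-hand side is the sum of the words
  y_V read along the sorted sign choices V. The right-hand side has the same description, by
  induction on n: appending y_{n+1} and applying \<tau> turns the word of V into the words of
  V \<union> {n+1} and of -V \<union> {-(n+1)}, and these are exactly the sign choices for n+1.
  The identity thus holds word by word.\<close>

abbreviation signed_range :: "nat \<Rightarrow> int set" where
  "signed_range n \<equiv> {i. 1 \<le> \<bar>i\<bar> \<and> \<bar>i\<bar> \<le> int n}"

lemma signed_range_eq: "signed_range n = {1..int n} \<union> uminus ` {1..int n}"
  by (auto simp: abs_if image_iff intro: exI[of _ "- _"])

lemma signed_range_Suc:
  "signed_range (Suc n) = signed_range n \<union> {int n + 1, - int n - 1}"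
  by auto

lemma finite_signed_range: "finite (signed_range n)"
  by (simp add: signed_range_eq)

definition sign_choices :: "nat \<Rightarrow> int set set" where
  "sign_choices n = {V. V \<inter> uminus ` V = {} \<and> V \<union> uminus ` V = signed_range n}"

lemma sign_choices_subset: "V \<in> sign_choices n \<Longrightarrow> V \<subseteq> signed_range n"
  unfolding sign_choices_def by blast

lemma finite_sign_choice: "V \<in> sign_choices n \<Longrightarrow> finite V"
  using sign_choices_subset finite_signed_range by (rule finite_subset)

lemma finite_sign_choices: "finite (sign_choices n)"
proof (rule finite_subset)
  show "sign_choices n \<subseteq> Pow (signed_range n)"
    using sign_choices_subset by blast
qed (simp add: finite_signed_range)

lemma uminus_sign_choices: "V \<in> sign_choices n \<Longrightarrow> uminus ` V \<in> sign_choices n"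
  by (auto simp: sign_choices_def image_image)

lemma sign_choices_0: "sign_choices 0 = {{}}"
  by (auto simp: sign_choices_def)

lemma sign_choices_Suc:
  "sign_choices (Suc n) =
     insert (int n + 1) ` sign_choices n \<union> insert (- int n - 1) ` sign_choices n"
proof (intro equalityI subsetI)
  fix V assume "V \<in> sign_choices (Suc n)"
  then have disj: "V \<inter> uminus ` V = {}" and cover: "V \<union> uminus ` V = signed_range (Suc n)"
    by (simp_all add: sign_choices_def)
  define W where "W = V - {int n + 1, - int n - 1}"
  have "uminus ` W = uminus ` V - {int n + 1, - int n - 1}"
    unfolding W_def by force
  then have "W \<union> uminus ` W = signed_range n"
    using cover unfolding W_def signed_range_Suc by auto
  moreover have "W \<inter> uminus ` W = {}"
    using disj unfolding W_def by blast
  ultimately have "W \<in> sign_choices n"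
    by (simp add: sign_choices_def)
  moreover have "int n + 1 \<in> V \<union> uminus ` V"
    using cover by simp
  then have "int n + 1 \<in> V \<or> - int n - 1 \<in> V"
    by (metis UnE diff_conv_add_uminus imageE minus_add_distrib minus_minus)
  then have "V = insert (int n + 1) W \<or> V = insert (- int n - 1) W"
    unfolding W_def using disj by force
  ultimately show
    "V \<in> insert (int n + 1) ` sign_choices n \<union> insert (- int n - 1) ` sign_choices n"
    by blast
next
  fix V assume "V \<in> insert (int n + 1) ` sign_choices n \<union> insert (- int n - 1) ` sign_choices n"
  then obtain W x
    where W: "W \<in> sign_choices n" and V: "V = insert x W" and x: "\<bar>x\<bar> = int n + 1"
    by auto
  have cover: "W \<union> uminus ` W = signed_range n" and disj: "W \<inter> uminus ` W = {}"
    using W by (simp_all add: sign_choices_def)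
  have "x \<notin> W" "- x \<notin> W"
    using sign_choices_subset[OF W] x by force+
  then have "V \<inter> uminus ` V = {}"
    unfolding V using disj x by (auto simp: image_iff)
  moreover have "{x, - x} = {int n + 1, - int n - 1}"
    using x by (cases "x \<ge> 0") auto
  then have "V \<union> uminus ` V = signed_range (Suc n)"
    unfolding V signed_range_Suc cover[symmetric] by auto
  ultimately show "V \<in> sign_choices (Suc n)"
    by (simp add: sign_choices_def)
qed

lemma card_sign_choices: "V \<in> sign_choices n \<Longrightarrow> card V = n"
proof (induction n arbitrary: V)
  case 0
  then show ?case by (simp add: sign_choices_0)
next
  case (Suc n)
  then obtain W x
    where W: "W \<in> sign_choices n" and V: "V = insert x W" and x: "\<bar>x\<bar> = int n + 1"
    unfolding sign_choices_Suc by auto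
  have "x \<notin> W"
    using sign_choices_subset[OF W] x by force
  then show ?case
    using Suc.IH[OF W] V finite_sign_choice[OF W] by simp
qed

lemma sum_sign_choices_Suc:
  "(\<Sum>V\<in>sign_choices (Suc n). F V) =
     (\<Sum>V\<in>sign_choices n. F (insert (int n + 1) V) + F (insert (- int n - 1) (uminus ` V)))"
proof -
  have fresh: "int n + 1 \<notin> V" "- int n - 1 \<notin> V" if "V \<in> sign_choices n" for V
    using sign_choices_subset[OF that] by force+
  have inj: "inj_on (insert (int n + 1)) (sign_choices n)"
    "inj_on (insert (- int n - 1)) (sign_choices n)"
    by (auto intro!: inj_onI simp: insert_ident fresh)
  have "insert (int n + 1) ` sign_choices n \<inter> insert (- int n - 1) ` sign_choices n = {}"
    using fresh by fastforce
  then have "(\<Sum>V\<in>sign_choices (Suc n). F V) =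
      (\<Sum>V\<in>sign_choices n. F (insert (int n + 1) V)) +
      (\<Sum>V\<in>sign_choices n. F (insert (- int n - 1) V))"
    unfolding sign_choices_Suc
    by (simp add: sum.union_disjoint finite_sign_choices sum.reindex inj)
  also have "(\<Sum>V\<in>sign_choices n. F (insert (- int n - 1) V)) =
      (\<Sum>V\<in>sign_choices n. F (insert (- int n - 1) (uminus ` V)))"
    by (rule sum.reindex_bij_witness[where i="image uminus" and j="image uminus"])
      (auto simp: uminus_sign_choices image_image)
  finally show ?thesis
    by (simp add: sum.distrib)
qed

lemma sorted_list_of_set_insert_greatest:
  fixes x :: "'a::linorder"
  assumes "finite A" "\<forall>a\<in>A. a < x"
  shows "sorted_list_of_set (insert x A) = sorted_list_of_set A @ [x]"
proof -
  have "sorted_list_of_set (set (sorted_list_of_set A @ [x])) = sorted_list_of_set A @ [x]"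
    using assms by (intro sorted_list_of_set.idem_if_sorted_distinct) (auto simp: sorted_append)
  then show ?thesis
    using assms(1) by simp
qed

lemma sorted_list_of_set_insert_least:
  fixes x :: "'a::linorder"
  assumes "finite A" "\<forall>a\<in>A. x < a"
  shows "sorted_list_of_set (insert x A) = x # sorted_list_of_set A"
proof -
  have "sorted_list_of_set (set (x # sorted_list_of_set A)) = x # sorted_list_of_set A"
    using assms by (intro sorted_list_of_set.idem_if_sorted_distinct) (auto simp: less_imp_le)
  then show ?thesis
    using assms(1) by simp
qed

lemma sorted_list_of_set_uminus:
  fixes A :: "'a::linordered_ab_group_add set"
  assumes "finite A"
  shows "sorted_list_of_set (uminus ` A) = rev (map uminus (sorted_list_of_set A))"
proof -
  let ?xs = "rev (map uminus (sorted_list_of_set A))"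
  have "sorted_list_of_set (set ?xs) = ?xs"
    by (intro sorted_list_of_set.idem_if_sorted_distinct)
      (simp_all add: sorted_wrt_rev sorted_wrt_map distinct_map)
  then show ?thesis
    using assms by simp
qed

lemma yidx_append_singleton:
  assumes "1 \<le> \<bar>k\<bar>" "\<bar>k\<bar> \<le> int (length ys)"
  shows "yidx bar (ys @ [y]) k = yidx bar ys k"
  using assms by (auto simp: yidx_def nth_append)

lemma yidx_append_singleton_last:
  "yidx bar (ys @ [y]) (int (length ys) + 1) = y"
  "yidx bar (ys @ [y]) (- int (length ys) - 1) = bar y"
  by (simp_all add: yidx_def nat_add_distrib)

lemma yidx_uminus:
  assumes "\<And>x. bar (bar x) = x" "k \<noteq> 0"
  shows "yidx bar ys (- k) = bar (yidx bar ys k)"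
  using assms by (simp add: yidx_def)

definition word_of_set :: "('y \<Rightarrow> 'y) \<Rightarrow> 'y list \<Rightarrow> int set \<Rightarrow> 'y list" where
  "word_of_set bar ys V = map (yidx bar ys) (sorted_list_of_set V)"

lemma word_of_set_insert_greatest:
  assumes V: "V \<in> sign_choices (length ys)"
  shows "word_of_set bar (ys @ [y]) (insert (int (length ys) + 1) V) =
    word_of_set bar ys V @ [y]"
proof -
  have fin: "finite V" and sub: "V \<subseteq> signed_range (length ys)"
    using finite_sign_choice[OF V] sign_choices_subset[OF V] .
  then have "sorted_list_of_set (insert (int (length ys) + 1) V) =
      sorted_list_of_set V @ [int (length ys) + 1]"
    by (intro sorted_list_of_set_insert_greatest) force+
  moreover have "map (yidx bar (ys @ [y])) (sorted_list_of_set V) =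
      map (yidx bar ys) (sorted_list_of_set V)"
    using fin sub by (intro map_cong refl yidx_append_singleton) auto
  ultimately show ?thesis
    by (simp add: word_of_set_def yidx_append_singleton_last)
qed

lemma word_of_set_insert_least_uminus:
  assumes inv: "\<And>x. bar (bar x) = x" and V: "V \<in> sign_choices (length ys)"
  shows "word_of_set bar (ys @ [y]) (insert (- int (length ys) - 1) (uminus ` V)) =
    rev (map bar (word_of_set bar ys V @ [y]))"
proof -
  have fin: "finite V" and sub: "V \<subseteq> signed_range (length ys)"
    using finite_sign_choice[OF V] sign_choices_subset[OF V] .
  then have "sorted_list_of_set (insert (- int (length ys) - 1) (uminus ` V)) =
      (- int (length ys) - 1) # rev (map uminus (sorted_list_of_set V))"
    by (subst sorted_list_of_set_insert_least) (force simp: sorted_list_of_set_uminus)+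
  moreover have "map (yidx bar (ys @ [y]) \<circ> uminus) (sorted_list_of_set V) =
      map (bar \<circ> yidx bar ys) (sorted_list_of_set V)"
  proof (rule map_cong[OF refl])
    fix k assume "k \<in> set (sorted_list_of_set V)"
    then have "1 \<le> \<bar>k\<bar>" "\<bar>k\<bar> \<le> int (length ys)"
      using fin sub by auto
    then show "(yidx bar (ys @ [y]) \<circ> uminus) k = (bar \<circ> yidx bar ys) k"
      by (simp add: yidx_append_singleton yidx_uminus inv)
  qed
  ultimately show ?thesis
    by (simp add: word_of_set_def yidx_append_singleton_last rev_map)
qed

lemma tau_iter_snoc: "tau_iter bar (ys @ [y]) = tau bar (rmul (tau_iter bar ys) y)"
  by (cases ys) (auto simp: rmul_def)

lemma sum_list_map_tau_rmul:
  "sum_list (map g (tau bar (rmul T y))) =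
     sum_list (map (\<lambda>u. g (u @ [y]) + g (rev (map bar (u @ [y])))) T)"
  by (induction T) (auto simp: tau_def rmul_def ac_simps)

lemma sum_list_map_tau_iter:
  fixes g :: "'y list \<Rightarrow> 'a::comm_monoid_add"
  assumes inv: "\<And>x. bar (bar x) = x"
  shows "sum_list (map g (tau_iter bar ys)) =
    (\<Sum>V\<in>sign_choices (length ys). g (word_of_set bar ys V))"
proof (induction ys arbitrary: g rule: rev_induct)
  case Nil
  show ?case by (simp add: sign_choices_0 word_of_set_def)
next
  case (snoc y ys)
  have "sum_list (map g (tau_iter bar (ys @ [y]))) =
      (\<Sum>V\<in>sign_choices (length ys).
        g (word_of_set bar ys V @ [y]) + g (rev (map bar (word_of_set bar ys V @ [y]))))"
    unfolding tau_iter_snoc sum_list_map_tau_rmul by (rule snoc.IH)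
  also have "\<dots> = (\<Sum>V\<in>sign_choices (Suc (length ys)). g (word_of_set bar (ys @ [y]) V))"
    unfolding sum_sign_choices_Suc
    by (intro sum.cong refl)
      (simp add: word_of_set_insert_greatest word_of_set_insert_least_uminus inv)
  finally show ?case by simp
qed

definition incr_signed_perm :: "nat \<Rightarrow> int set \<Rightarrow> int \<Rightarrow> int" where
  "incr_signed_perm n V i =
     (if i \<in> {1..int n} then sorted_list_of_set V ! (nat i - 1)
      else if - i \<in> {1..int n} then - (sorted_list_of_set V ! (nat (- i) - 1))
      else i)"

lemma incr_signed_perm_uminus: "incr_signed_perm n V (- i) = - incr_signed_perm n V i"
  by (auto simp: incr_signed_perm_def)

lemma length_sorted_list_of_sign_choice:
  "V \<in> sign_choices n \<Longrightarrow> length (sorted_list_of_set V) = n"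
  by (simp add: card_sign_choices)

lemma image_incr_signed_perm_positive:
  assumes V: "V \<in> sign_choices n"
  shows "incr_signed_perm n V ` {1..int n} = V"
proof -
  let ?s = "sorted_list_of_set V"
  have len: "length ?s = n"
    using V by (rule length_sorted_list_of_sign_choice)
  have "set ?s = V"
    using finite_sign_choice[OF V] by simp
  moreover have "incr_signed_perm n V ` {1..int n} = set ?s"
  proof (intro equalityI subsetI)
    fix v assume "v \<in> incr_signed_perm n V ` {1..int n}"
    then obtain i where "i \<in> {1..int n}" "v = ?s ! (nat i - 1)"
      by (auto simp: incr_signed_perm_def)
    moreover have "nat i - 1 < length ?s"
      using \<open>i \<in> {1..int n}\<close> len by auto
    ultimately show "v \<in> set ?s"
      by simp
  next
    fix v assume "v \<in> set ?s"
    then obtain k where k: "k < n" "v = ?s ! k"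
      using len by (auto simp: in_set_conv_nth)
    then have "incr_signed_perm n V (int k + 1) = v"
      by (simp add: incr_signed_perm_def nat_add_distrib)
    moreover have "int k + 1 \<in> {1..int n}"
      using k by simp
    ultimately show "v \<in> incr_signed_perm n V ` {1..int n}"
      by (metis imageI)
  qed
  ultimately show ?thesis by simp
qed

lemma image_incr_signed_perm:
  assumes V: "V \<in> sign_choices n"
  shows "incr_signed_perm n V ` signed_range n = signed_range n"
proof -
  have "incr_signed_perm n V ` uminus ` {1..int n} = uminus ` incr_signed_perm n V ` {1..int n}"
    unfolding image_image incr_signed_perm_uminus ..
  then have "incr_signed_perm n V ` signed_range n = V \<union> uminus ` V"
    unfolding signed_range_eq image_Un image_incr_signed_perm_positive[OF V] by simp
  also have "\<dots> = signed_range n"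
    using V by (simp add: sign_choices_def)
  finally show ?thesis .
qed

lemma incr_signed_perm_in_incr_signed_perms:
  assumes V: "V \<in> sign_choices n"
  shows "incr_signed_perm n V \<in> incr_signed_perms n"
proof -
  let ?h = "incr_signed_perm n V" and ?s = "sorted_list_of_set V"
  have "inj_on ?h (signed_range n)"
    using image_incr_signed_perm[OF V] finite_signed_range by (intro eq_card_imp_inj_on) simp_all
  then have "bij_betw ?h (signed_range n) (signed_range n)"
    using image_incr_signed_perm[OF V] by (simp add: bij_betw_def)
  moreover have "?h i = i" if "\<not> (1 \<le> \<bar>i\<bar> \<and> \<bar>i\<bar> \<le> int n)" for i
    using that by (auto simp: incr_signed_perm_def)
  moreover have "?h i < ?h (i + 1)" if "1 \<le> i" "i < int n" for i
  proof -
    have "?h i = ?s ! (nat i - 1)" "?h (i + 1) = ?s ! nat i"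
      using that by (simp_all add: incr_signed_perm_def nat_add_distrib)
    moreover have "nat i - 1 < nat i" "nat i < length ?s"
      using that length_sorted_list_of_sign_choice[OF V] by linarith+
    ultimately show ?thesis
      using strict_sorted_list_of_set sorted_wrt_nth_less by metis
  qed
  ultimately show ?thesis
    by (simp add: incr_signed_perms_def signed_perms_def incr_signed_perm_uminus)
qed

lemma act_word_incr_signed_perm:
  assumes V: "V \<in> sign_choices n" and len: "length ys = n"
  shows "act_word bar ys (incr_signed_perm n V) = word_of_set bar ys V"
proof (rule nth_equalityI)
  show "length (act_word bar ys (incr_signed_perm n V)) = length (word_of_set bar ys V)"
    using len length_sorted_list_of_sign_choice[OF V] by (simp add: act_word_def word_of_set_def)
next
  fix k assume "k < length (act_word bar ys (incr_signed_perm n V))"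
  then have "k < n"
    using len by (simp add: act_word_def del: upt_Suc)
  then show "act_word bar ys (incr_signed_perm n V) ! k = word_of_set bar ys V ! k"
    using len length_sorted_list_of_sign_choice[OF V]
    by (simp add: act_word_def word_of_set_def incr_signed_perm_def nat_add_distrib del: upt_Suc)
qed

lemma signed_perm_image_positive_in_sign_choices:
  assumes "w \<in> signed_perms n"
  shows "w ` {1..int n} \<in> sign_choices n"
proof -
  have bij: "bij_betw w (signed_range n) (signed_range n)" and odd: "\<And>i. w (- i) = - w i"
    using assms by (simp_all add: signed_perms_def)
  have neg: "uminus ` w ` {1..int n} = w ` uminus ` {1..int n}"
    unfolding image_image odd ..
  have "w ` {1..int n} \<inter> w ` uminus ` {1..int n} = w ` ({1..int n} \<inter> uminus ` {1..int n})"
    using bij unfolding bij_betw_def signed_range_eq by (intro inj_on_image_Int[symmetric]) auto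
  also have "\<dots> = {}"
    by auto
  finally have "w ` {1..int n} \<inter> uminus ` w ` {1..int n} = {}"
    unfolding neg .
  moreover have "w ` {1..int n} \<union> uminus ` w ` {1..int n} = signed_range n"
    using bij unfolding neg bij_betw_def signed_range_eq image_Un by simp
  ultimately show ?thesis
    by (simp add: sign_choices_def)
qed

lemma sorted_list_of_image_positive_incr_signed_perm:
  assumes "w \<in> incr_signed_perms n"
  shows "sorted_list_of_set (w ` {1..int n}) = map (\<lambda>k. w (int k)) [1..<n + 1]"
proof -
  let ?l = "map (\<lambda>k. w (int k)) [1..<n + 1]"
  have incr: "w i < w (i + 1)" if "1 \<le> i" "i < int n" for i
    using assms that by (simp add: incr_signed_perms_def)
  have "?l ! k < ?l ! Suc k" if "Suc k < length ?l" for k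
    using that incr[of "int k + 1"] by (simp add: nth_upt add_ac del: upt_Suc)
  then have "sorted_wrt (<) ?l"
    by (simp add: sorted_wrt_iff_nth_Suc_transp del: upt_Suc)
  moreover have "set ?l = w ` int ` {1..<n + 1}"
    by (simp only: set_map set_upt image_image)
  then have "set ?l = w ` {1..int n}"
    using image_int_atLeastAtMost[of 1 n] by (simp add: atLeastLessThanSuc_atLeastAtMost)
  ultimately show ?thesis
    by (metis sorted_list_of_set.idem_if_sorted_distinct strict_sorted_iff)
qed

lemma incr_signed_perm_of_image_positive:
  assumes w: "w \<in> incr_signed_perms n"
  shows "incr_signed_perm n (w ` {1..int n}) = w"
proof
  fix i
  have odd: "w (- i) = - w i"
    and fix_out: "\<not> (1 \<le> \<bar>i\<bar> \<and> \<bar>i\<bar> \<le> int n) \<Longrightarrow> w i = i"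
    using w by (simp_all add: incr_signed_perms_def signed_perms_def)
  have "map (\<lambda>k. w (int k)) [1..<n + 1] ! (nat j - 1) = w j" if "j \<in> {1..int n}" for j
  proof -
    have "nat j - 1 < n" "1 + (nat j - 1) = nat j"
      using that by auto
    then show ?thesis
      using that by (simp del: upt_Suc)
  qed
  then show "incr_signed_perm n (w ` {1..int n}) i = w i"
    using fix_out odd
    by (auto simp: incr_signed_perm_def sorted_list_of_image_positive_incr_signed_perm[OF w])
qed

lemma bij_betw_incr_signed_perm:
  "bij_betw (incr_signed_perm n) (sign_choices n) (incr_signed_perms n)"
proof (rule bij_betw_byWitness[where f' = "\<lambda>w. w ` {1..int n}"])
  show "\<forall>V\<in>sign_choices n. incr_signed_perm n V ` {1..int n} = V"
    by (simp add: image_incr_signed_perm_positive)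
  show "\<forall>w\<in>incr_signed_perms n. incr_signed_perm n (w ` {1..int n}) = w"
    by (simp add: incr_signed_perm_of_image_positive)
  show "incr_signed_perm n ` sign_choices n \<subseteq> incr_signed_perms n"
    using incr_signed_perm_in_incr_signed_perms by blast
  show "(\<lambda>w. w ` {1..int n}) ` incr_signed_perms n \<subseteq> sign_choices n"
    using signed_perm_image_positive_in_sign_choices by (auto simp: incr_signed_perms_def)
qed

theorem proposition8p7:
  fixes scY :: "rat \<Rightarrow> 'y::ab_group_add \<Rightarrow> 'y" and bar :: "'y \<Rightarrow> 'y"
    and scV :: "rat \<Rightarrow> 'v::ab_group_add \<Rightarrow> 'v" and f :: "'y list \<Rightarrow> 'v"
    and ys :: "'y list" and n :: nat
  assumes "module scY" and "lin_involution scY bar"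
    and "length ys = n" and "1 \<le> n"
    and "module scV" and "multilinear scY scV n f"
  shows "(\<Sum>w\<in>incr_signed_perms n. f (act_word bar ys w)) = sum_list (map f (tau_iter bar ys))"
proof -
  have inv: "\<And>x. bar (bar x) = x"
    using assms(2) by (simp add: lin_involution_def)
  have "(\<Sum>w\<in>incr_signed_perms n. f (act_word bar ys w)) =
      (\<Sum>V\<in>sign_choices n. f (act_word bar ys (incr_signed_perm n V)))"
    by (rule sum.reindex_bij_betw[OF bij_betw_incr_signed_perm, symmetric])
  also have "\<dots> = (\<Sum>V\<in>sign_choices n. f (word_of_set bar ys V))"
    using assms(3) by (intro sum.cong refl) (simp add: act_word_incr_signed_perm)
  also have "\<dots> = sum_list (map f (tau_iter bar ys))"
    using sum_list_map_tau_iter[OF inv, of f ys] assms(3) by simp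
  finally show ?thesis .
qed

end
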